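(* Consider the system \[ \begin{aligned} \tfrac{d}{dt}\mathrm{LTR}_R &= k_{OFF}\,\mathrm{LTR}_I - k_{ON}\,\mathrm{LTR}_R,\\ \tfrac{d}{dt}\mathrm{LTR}_I &= -\Big[\tfrac{w_3w_4}{w_5}k_A(\mathrm{Tat}) + k_{OFF}\Big]\mathrm{LTR}_I + w_1k_I\,\mathrm{LTR}_A + k_{ON}\,\mathrm{LTR}_R,\\ \tfrac{d}{dt}\mathrm{LTR}_A &= \tfrac{w_3w_4}{w_5}k_A(\mathrm{Tat})\,\mathrm{LTR}_I - w_1k_I\,\mathrm{LTR}_A,\\ \tfrac{d}{dt}\mathrm{Tat} &= \alpha_{p_1}\mathrm{env}_I - \gamma_{p_1}\mathrm{Tat},\\ \tfrac{d}{dt}\mathrm{TAR} &= \alpha_{m_1,R}\mathrm{LTR}_R + \alpha_{m_1,I}\mathrm{LTR}_I + \alpha_{m_1,A}\mathrm{LTR}_A - \gamma_{m_1}\mathrm{TAR},\\ \tfrac{d}{dt}\mathrm{env}_I &= \alpha_{m_2,I}\mathrm{LTR}_I - (\gamma_{m_2}+\alpha_{p_1}+\alpha_{p_2})\mathrm{env}_I,\\ \tfrac{d}{dt}\mathrm{env}_A &= f_{m_2}(\mathrm{Tat})\,\mathrm{LTR}_A - (\gamma_{m_2}+\alpha_{p_2})\mathrm{env}_A,\\ \tfrac{d}{dt}\mathrm{Pr55} &= \alpha_{p_2}\mathrm{env}_I + \alpha_{p_2}\mathrm{env}_A - (\alpha_{p_3}/w_2)\mathrm{Pr55},\\ \tfrac{d}{dt}\mathrm{p24}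 &= (\alpha_{p_3}/w_2)\mathrm{Pr55} - \gamma_{p_2}\mathrm{p24}, \end{aligned} \] with \[ f_{m_2}(\mathrm{Tat}) = \frac{\alpha_{m_2,A}}{v_a}\,\frac{1+v_a(\mathrm{Tat}/T_c)^n}{1+(\mathrm{Tat}/T_c)^n},\qquad k_A(\mathrm{Tat}) = \frac{\beta_{m_2,A}}{v_b}\,\frac{1+v_b(\mathrm{Tat}/T_c)^m}{1+(\mathrm{Tat}/T_c)^m}, \] where $v_a>1$, $v_b>1$. Then this system is positively invariant, i.e. solutions starting with all components nonnegative remain nonnegative for all $t\ge 0$.
   Context: All parameters ($k_{ON},k_{OFF},k_I,w_1,\dots,w_5,\alpha$'s, $\beta_{m_2,A}$, $\gamma$'s, $T_c=\mathrm{Tat}_{crit}$) are positive constants, and $n,m\ge 1$. The LTR variables represent proportions of a conserved total LTR: $\mathrm{LTR}_R+\mathrm{LTR}_I+\mathrm{LTR}_A=1$. *)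

theory Defs
  imports Complex_Main
begin

definition fm2 :: "real \<Rightarrow> real \<Rightarrow> real \<Rightarrow> real \<Rightarrow> real \<Rightarrow> real" where
  "fm2 alpha_m2A va Tc n Tat =
     (alpha_m2A / va) * ((1 + va * (Tat / Tc) powr n) / (1 + (Tat / Tc) powr n))"

definition kA :: "real \<Rightarrow> real \<Rightarrow> real \<Rightarrow> real \<Rightarrow> real \<Rightarrow> real" where
  "kA beta_m2A vb Tc m Tat =
     (beta_m2A / vb) * ((1 + vb * (Tat / Tc) powr m) / (1 + (Tat / Tc) powr m))"

end

theory Submission
  imports Defs "HOL-Analysis.Analysis"
begin

(* The LTR block is a linear system whose matrix has nonnegative off-diagonal entries and
   bounded row sums (the Tat-dependent rate k_A lies between 0 and beta_m2A), and every other
   equation reads x' = f(t) - c x with a forcing f that is nonnegative as soon as the upstream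
   variables are; so the variables can be handled in the order LTR, env_I, Tat, TAR, env_A,
   Pr55, p24.  For such cooperative systems nonnegativity follows from a first-exit argument:
   if some component became negative, the shifted components x_j + eps exp(L t) would have a
   first zero tau > 0, and there the inward-pointing vector field gives that component a
   positive derivative, although it decreases to 0 at tau. *)

lemma first_exit_time:
  fixes z :: "'i \<Rightarrow> real \<Rightarrow> real"
  assumes fin: "finite I"
    and cont: "\<And>j. j \<in> I \<Longrightarrow> continuous_on {0..T} (z j)"
    and start: "\<And>j. j \<in> I \<Longrightarrow> 0 < z j 0"
    and exit: "i \<in> I" "0 \<le> T" "z i T \<le> 0"
  obtains \<tau> j where "0 < \<tau>" "\<tau> \<le> T" "j \<in> I" "z j \<tau> = 0"
    "\<And>k s. k \<in> I \<Longrightarrow> 0 \<le> s \<Longrightarrow> s < \<tau> \<Longrightarrow> 0 < z k s"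
    "\<And>k. k \<in> I \<Longrightarrow> 0 \<le> z k \<tau>"
proof -
  define S where "S = (\<Union>j\<in>I. {s \<in> {0..T}. z j s \<le> 0})"
  define \<tau> where "\<tau> = Inf S"
  have "closed S"
    unfolding S_def using fin cont by (intro closed_UN ballI continuous_on_closed_Collect_le) auto
  moreover have "bdd_below S" "T \<in> S"
    unfolding S_def using exit by (auto intro: bdd_belowI[of _ 0])
  ultimately have "\<tau> \<in> S" and \<tau>_least: "\<And>s. s \<in> S \<Longrightarrow> \<tau> \<le> s"
    unfolding \<tau>_def by (auto intro: closed_contains_Inf cInf_lower)
  then obtain j where j: "j \<in> I" "0 \<le> \<tau>" "\<tau> \<le> T" "z j \<tau> \<le> 0"
    unfolding S_def by auto
  have before: "0 < z k s" if "k \<in> I" "0 \<le> s" "s < \<tau>" for k s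
    using that \<tau>_least[of s] \<open>\<tau> \<le> T\<close> unfolding S_def by force
  have "0 < \<tau>"
    using j start[of j] by (cases "\<tau> = 0") auto
  have at_\<tau>: "0 \<le> z k \<tau>" if "k \<in> I" for k
  proof (rule tendsto_lowerbound)
    show "(z k \<longlongrightarrow> z k \<tau>) (at_left \<tau>)"
      using continuous_on_subset[OF cont[OF that], of "{0..\<tau>}"] \<open>0 < \<tau>\<close> j
      by (intro continuous_on_Icc_at_leftD) auto
    show "\<forall>\<^sub>F s in at_left \<tau>. 0 \<le> z k s"
      using eventually_at_left_real[OF \<open>0 < \<tau>\<close>]
      by eventually_elim (simp add: before[OF that] less_imp_le)
  qed simp
  show thesis
    using that[of \<tau> j] \<open>0 < \<tau>\<close> j before at_\<tau> by force
qed

lemma nonneg_if_inward_at_boundary: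
  fixes x d :: "'i \<Rightarrow> real \<Rightarrow> real" and L :: real
  assumes fin: "finite I"
    and init: "\<And>j. j \<in> I \<Longrightarrow> 0 \<le> x j 0"
    and deriv: "\<And>j t. j \<in> I \<Longrightarrow> 0 \<le> t \<Longrightarrow> (x j has_real_derivative d j t) (at t within {0..})"
    and inward: "\<And>j t e. j \<in> I \<Longrightarrow> 0 \<le> t \<Longrightarrow> 0 < e \<Longrightarrow> (\<forall>k\<in>I. - e \<le> x k t) \<Longrightarrow>
                   x j t = - e \<Longrightarrow> 0 < d j t + L * e"
    and "i \<in> I" "0 \<le> T"
  shows "0 \<le> x i T"
proof (rule ccontr)
  assume "\<not> 0 \<le> x i T"
  define \<epsilon> where "\<epsilon> = - x i T / (2 * exp (L * T))"
  have "0 < \<epsilon>"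
    using \<open>\<not> 0 \<le> x i T\<close> by (simp add: \<epsilon>_def divide_neg_pos)
  define z where "z j s = x j s + \<epsilon> * exp (L * s)" for j s
  have z_deriv: "(z j has_real_derivative d j s + L * (\<epsilon> * exp (L * s))) (at s within {0..})"
    if "j \<in> I" "0 \<le> s" for j s
    unfolding z_def by (rule derivative_eq_intros deriv that refl | simp)+
  have z_cont: "continuous_on {0..T} (z k)" if "k \<in> I" for k
  proof (rule continuous_on_subset)
    show "continuous_on {0..} (z k)"
      by (rule DERIV_continuous_on, rule z_deriv[OF that]) simp
  qed auto
  have z_start: "0 < z k 0" if "k \<in> I" for k
    using init[OF that] \<open>0 < \<epsilon>\<close> by (simp add: z_def)
  have z_exit: "z i T \<le> 0"
    using \<open>\<not> 0 \<le> x i T\<close> by (simp add: z_def \<epsilon>_def)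
  obtain \<tau> j where "0 < \<tau>" "j \<in> I" "z j \<tau> = 0"
    and positive: "\<And>k s. k \<in> I \<Longrightarrow> 0 \<le> s \<Longrightarrow> s < \<tau> \<Longrightarrow> 0 < z k s"
    and nonneg: "\<And>k. k \<in> I \<Longrightarrow> 0 \<le> z k \<tau>"
    using first_exit_time[where z = z, OF fin z_cont z_start \<open>i \<in> I\<close> \<open>0 \<le> T\<close> z_exit] by metis
  have "0 < d j \<tau> + L * (\<epsilon> * exp (L * \<tau>))"
  proof (rule inward)
    show "\<forall>k\<in>I. - (\<epsilon> * exp (L * \<tau>)) \<le> x k \<tau>"
    proof
      fix k assume "k \<in> I"
      then show "- (\<epsilon> * exp (L * \<tau>)) \<le> x k \<tau>"
        using nonneg[of k] unfolding z_def by linarith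
    qed
  qed (use \<open>z j \<tau> = 0\<close> \<open>0 < \<epsilon>\<close> \<open>0 < \<tau>\<close> \<open>j \<in> I\<close> in \<open>auto simp: z_def\<close>)
  with has_real_derivative_pos_inc_left[OF z_deriv[OF \<open>j \<in> I\<close>]] \<open>0 < \<tau>\<close>
  obtain \<delta> where "0 < \<delta>"
    and decreasing: "\<forall>h>0. \<tau> - h \<in> {0..} \<longrightarrow> h < \<delta> \<longrightarrow> z j (\<tau> - h) < z j \<tau>"
    by (meson less_imp_le)
  define h where "h = min (\<delta> / 2) (\<tau> / 2)"
  have "0 < h" "h < \<delta>" "h < \<tau>"
    using \<open>0 < \<delta>\<close> \<open>0 < \<tau>\<close> by (auto simp: h_def)
  then show False
    using decreasing positive[OF \<open>j \<in> I\<close>, of "\<tau> - h"] \<open>z j \<tau> = 0\<close> by auto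
qed

lemma cooperative_linear_nonneg:
  fixes x f :: "'i \<Rightarrow> real \<Rightarrow> real" and a :: "'i \<Rightarrow> 'i \<Rightarrow> real \<Rightarrow> real"
  assumes fin: "finite I"
    and init: "\<And>i. i \<in> I \<Longrightarrow> 0 \<le> x i 0"
    and deriv: "\<And>i t. i \<in> I \<Longrightarrow> 0 \<le> t \<Longrightarrow>
                  (x i has_real_derivative f i t + (\<Sum>j\<in>I. a i j t * x j t)) (at t within {0..})"
    and forcing: "\<And>i t. i \<in> I \<Longrightarrow> 0 \<le> t \<Longrightarrow> 0 \<le> f i t"
    and off_diag: "\<And>i j t. i \<in> I \<Longrightarrow> j \<in> I \<Longrightarrow> j \<noteq> i \<Longrightarrow> 0 \<le> t \<Longrightarrow> 0 \<le> a i j t"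
    and row_sum: "\<And>i t. i \<in> I \<Longrightarrow> 0 \<le> t \<Longrightarrow> (\<Sum>j\<in>I. a i j t) \<le> B"
    and "i \<in> I" "0 \<le> T"
  shows "0 \<le> x i T"
proof (rule nonneg_if_inward_at_boundary[OF fin init deriv _ \<open>i \<in> I\<close> \<open>0 \<le> T\<close>])
  fix i t e
  assume "i \<in> I" "0 \<le> t" "0 < e" and above: "\<forall>k\<in>I. - e \<le> x k t" and "x i t = - e"
  have "- (e * B) \<le> - (e * (\<Sum>j\<in>I. a i j t))"
    using row_sum[OF \<open>i \<in> I\<close> \<open>0 \<le> t\<close>] \<open>0 < e\<close> by simp
  also have "\<dots> = (\<Sum>j\<in>I. a i j t * (- e))"
    by (simp add: sum_distrib_left sum_negf mult.commute)
  also have "\<dots> \<le> (\<Sum>j\<in>I. a i j t * x j t)"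
  proof (rule sum_mono)
    fix j assume "j \<in> I"
    then show "a i j t * (- e) \<le> a i j t * x j t"
      using above off_diag[OF \<open>i \<in> I\<close> \<open>j \<in> I\<close> _ \<open>0 \<le> t\<close>] \<open>x i t = - e\<close>
      by (cases "j = i") (auto intro!: mult_left_mono[of "- e", simplified])
  qed
  finally have "- (e * B) \<le> (\<Sum>j\<in>I. a i j t * x j t)" .
  moreover have "(B + 1) * e = e * B + e"
    by (simp add: algebra_simps)
  ultimately show "0 < f i t + (\<Sum>j\<in>I. a i j t * x j t) + (B + 1) * e"
    using forcing[OF \<open>i \<in> I\<close> \<open>0 \<le> t\<close>] \<open>0 < e\<close> by linarith
qed

lemma forced_decay_nonneg:
  fixes x f :: "real \<Rightarrow> real" and c :: real
  assumes "0 \<le> x 0"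
    and "\<And>t. 0 \<le> t \<Longrightarrow> (x has_real_derivative f t - c * x t) (at t within {0..})"
    and "\<And>t. 0 \<le> t \<Longrightarrow> 0 \<le> f t"
    and "0 \<le> T"
  shows "0 \<le> x T"
  using cooperative_linear_nonneg[of "{()}" "\<lambda>_. x" "\<lambda>_. f" "\<lambda>_ _ _. - c" "- c" "()" T] assms
  by auto

lemma promoter_cycle_nonneg:
  fixes R I A k :: "real \<Rightarrow> real" and kon koff ki kmax :: real
  assumes rates: "0 \<le> kon" "0 \<le> koff" "0 \<le> ki"
    and k_nonneg: "\<And>t. 0 \<le> t \<Longrightarrow> 0 \<le> k t"
    and k_le: "\<And>t. 0 \<le> t \<Longrightarrow> k t \<le> kmax"
    and dR: "\<And>t. 0 \<le> t \<Longrightarrow>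
              (R has_real_derivative koff * I t - kon * R t) (at t within {0..})"
    and dI: "\<And>t. 0 \<le> t \<Longrightarrow>
              (I has_real_derivative - (k t + koff) * I t + ki * A t + kon * R t) (at t within {0..})"
    and dA: "\<And>t. 0 \<le> t \<Longrightarrow>
              (A has_real_derivative k t * I t - ki * A t) (at t within {0..})"
    and init: "0 \<le> R 0" "0 \<le> I 0" "0 \<le> A 0"
    and "0 \<le> T"
  shows "0 \<le> R T \<and> 0 \<le> I T \<and> 0 \<le> A T"
proof -
  define x :: "nat \<Rightarrow> real \<Rightarrow> real" where "x = (!) [R, I, A]"
  define a :: "nat \<Rightarrow> nat \<Rightarrow> real \<Rightarrow> real"
    where "a i j t = [[- kon, koff, 0], [kon, - (k t + koff), ki], [0, k t, - ki]] ! i ! j" for i j t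
  have x_simps: "x 0 = R" "x 1 = I" "x 2 = A"
    by (simp_all add: x_def)
  have "0 \<le> x i T" if "i \<in> {0, 1, 2}" for i
  proof (rule cooperative_linear_nonneg[where I = "{0, 1, 2}" and x = x and a = a and f = "\<lambda>_ _. 0"
        and B = "kon + koff + ki + kmax"])
    show "(x l has_real_derivative 0 + (\<Sum>j\<in>{0, 1, 2}. a l j t * x j t)) (at t within {0..})"
      if l: "l \<in> {0, 1, 2}" and "0 \<le> t" for l t
    proof -
      consider "l = 0" | "l = 1" | "l = 2"
        using l by blast
      then show ?thesis
      proof cases
        case 1
        show ?thesis
          unfolding 1 x_simps using dR[OF \<open>0 \<le> t\<close>]
          by (rule DERIV_cong) (simp add: x_def a_def)
      next
        case 2
        show ?thesis
          unfolding 2 x_simps using dI[OF \<open>0 \<le> t\<close>]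
          by (rule DERIV_cong) (simp add: x_def a_def algebra_simps)
      next
        case 3
        show ?thesis
          unfolding 3 x_simps using dA[OF \<open>0 \<le> t\<close>]
          by (rule DERIV_cong) (simp add: x_def a_def)
      qed
    qed
    show "0 \<le> a i j t" if "i \<in> {0, 1, 2}" "j \<in> {0, 1, 2}" "j \<noteq> i" "0 \<le> t" for i j t
      using that rates k_nonneg[OF \<open>0 \<le> t\<close>] by (auto simp: a_def)
    show "(\<Sum>j\<in>{0, 1, 2}. a i j t) \<le> kon + koff + ki + kmax"
      if "i \<in> {0, 1, 2}" "0 \<le> t" for i t
      using that rates k_nonneg[OF \<open>0 \<le> t\<close>] k_le[OF \<open>0 \<le> t\<close>] by (auto simp: a_def)
  qed (use that init \<open>0 \<le> T\<close> in \<open>auto simp: x_def\<close>)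
  then have "0 \<le> x 0 T" "0 \<le> x 1 T" "0 \<le> x 2 T"
    by simp_all
  then show ?thesis
    unfolding x_simps by simp
qed

lemma kA_nonneg:
  assumes "0 \<le> b" "0 \<le> vb"
  shows "0 \<le> kA b vb Tc m T"
  using assms by (simp add: kA_def)

lemma kA_le:
  assumes "0 \<le> b" "1 \<le> vb"
  shows "kA b vb Tc m T \<le> b"
proof -
  define p where "p = (T / Tc) powr m"
  have "0 \<le> p"
    by (simp add: p_def)
  then have "(1 + vb * p) / (1 + p) \<le> vb"
    using assms by (simp add: field_simps)
  then have "b / vb * ((1 + vb * p) / (1 + p)) \<le> b / vb * vb"
    using assms by (intro mult_left_mono) auto
  then show ?thesis
    using assms by (simp add: kA_def p_def)
qed

lemma fm2_nonneg:
  assumes "0 \<le> a" "0 \<le> va"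
  shows "0 \<le> fm2 a va Tc n T"
  using assms by (simp add: fm2_def)

theorem mainTheorem3:
  fixes kON kOFF kI w1 w2 w3 w4 w5 :: real
    and ap1 ap2 ap3 am1R am1I am1A am2I am2A bm2A :: real
    and gp1 gp2 gm1 gm2 :: real
    and Tc va vb n m :: real
    and LR LI LA Tat TAR envI envA Pr55 p24 :: "real \<Rightarrow> real"
  assumes pos: "kON > 0" "kOFF > 0" "kI > 0" "w1 > 0" "w2 > 0" "w3 > 0" "w4 > 0" "w5 > 0"
    and pos_alpha: "ap1 > 0" "ap2 > 0" "ap3 > 0" "am1R > 0" "am1I > 0" "am1A > 0"
        "am2I > 0" "am2A > 0" "bm2A > 0"
    and pos_gamma: "gp1 > 0" "gp2 > 0" "gm1 > 0" "gm2 > 0"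
    and Tc_pos: "Tc > 0"
    and v_gt: "va > 1" "vb > 1"
    and nm: "n \<ge> 1" "m \<ge> 1"
    and dLR: "\<And>t. t \<ge> 0 \<Longrightarrow>
       (LR has_real_derivative (kOFF * LI t - kON * LR t)) (at t within {0..})"
    and dLI: "\<And>t. t \<ge> 0 \<Longrightarrow>
       (LI has_real_derivative
          (- (w3 * w4 / w5 * kA bm2A vb Tc m (Tat t) + kOFF) * LI t
           + w1 * kI * LA t + kON * LR t)) (at t within {0..})"
    and dLA: "\<And>t. t \<ge> 0 \<Longrightarrow>
       (LA has_real_derivative
          (w3 * w4 / w5 * kA bm2A vb Tc m (Tat t) * LI t - w1 * kI * LA t)) (at t within {0..})"
    and dTat: "\<And>t. t \<ge> 0 \<Longrightarrow>
       (Tat has_real_derivative (ap1 * envI t - gp1 * Tat t)) (at t within {0..})"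
    and dTAR: "\<And>t. t \<ge> 0 \<Longrightarrow>
       (TAR has_real_derivative
          (am1R * LR t + am1I * LI t + am1A * LA t - gm1 * TAR t)) (at t within {0..})"
    and denvI: "\<And>t. t \<ge> 0 \<Longrightarrow>
       (envI has_real_derivative (am2I * LI t - (gm2 + ap1 + ap2) * envI t)) (at t within {0..})"
    and denvA: "\<And>t. t \<ge> 0 \<Longrightarrow>
       (envA has_real_derivative
          (fm2 am2A va Tc n (Tat t) * LA t - (gm2 + ap2) * envA t)) (at t within {0..})"
    and dPr55: "\<And>t. t \<ge> 0 \<Longrightarrow>
       (Pr55 has_real_derivative
          (ap2 * envI t + ap2 * envA t - (ap3 / w2) * Pr55 t)) (at t within {0..})"
    and dp24: "\<And>t. t \<ge> 0 \<Longrightarrow>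
       (p24 has_real_derivative ((ap3 / w2) * Pr55 t - gp2 * p24 t)) (at t within {0..})"
    and cons0: "LR 0 + LI 0 + LA 0 = 1"
    and init: "LR 0 \<ge> 0" "LI 0 \<ge> 0" "LA 0 \<ge> 0" "Tat 0 \<ge> 0" "TAR 0 \<ge> 0"
        "envI 0 \<ge> 0" "envA 0 \<ge> 0" "Pr55 0 \<ge> 0" "p24 0 \<ge> 0"
  shows "\<forall>t\<ge>0. LR t \<ge> 0 \<and> LI t \<ge> 0 \<and> LA t \<ge> 0 \<and> Tat t \<ge> 0 \<and> TAR t \<ge> 0
                 \<and> envI t \<ge> 0 \<and> envA t \<ge> 0 \<and> Pr55 t \<ge> 0 \<and> p24 t \<ge> 0"
proof -
  have "0 \<le> w3 * w4 / w5" "0 \<le> kA bm2A vb Tc m T" "kA bm2A vb Tc m T \<le> bm2A" for T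
    using pos pos_alpha v_gt by (simp_all add: kA_nonneg kA_le)
  then have k_bounds: "0 \<le> w3 * w4 / w5 * kA bm2A vb Tc m T"
    "w3 * w4 / w5 * kA bm2A vb Tc m T \<le> w3 * w4 / w5 * bm2A" for T
    by (metis mult_nonneg_nonneg, metis mult_left_mono)
  have LTR_nonneg: "0 \<le> LR t \<and> 0 \<le> LI t \<and> 0 \<le> LA t" if "0 \<le> t" for t
    by (rule promoter_cycle_nonneg[where kmax = "w3 * w4 / w5 * bm2A",
          OF _ _ _ _ _ dLR dLI dLA init(1-3) that])
      (use pos k_bounds in auto)
  have envI_nonneg: "0 \<le> envI t" if "0 \<le> t" for t
    by (rule forced_decay_nonneg[OF init(6) denvI _ that]) (use LTR_nonneg pos_alpha in auto)
  have Tat_nonneg: "0 \<le> Tat t" if "0 \<le> t" for t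
    by (rule forced_decay_nonneg[OF init(4) dTat _ that]) (use envI_nonneg pos_alpha in auto)
  have TAR_nonneg: "0 \<le> TAR t" if "0 \<le> t" for t
    by (rule forced_decay_nonneg[OF init(5) dTAR _ that]) (use LTR_nonneg pos_alpha in auto)
  have envA_nonneg: "0 \<le> envA t" if "0 \<le> t" for t
    by (rule forced_decay_nonneg[OF init(7) denvA _ that])
      (use LTR_nonneg pos_alpha v_gt in \<open>auto simp: fm2_nonneg\<close>)
  have Pr55_nonneg: "0 \<le> Pr55 t" if "0 \<le> t" for t
    by (rule forced_decay_nonneg[OF init(8) dPr55 _ that])
      (use envI_nonneg envA_nonneg pos_alpha in auto)
  have p24_nonneg: "0 \<le> p24 t" if "0 \<le> t" for t
    by (rule forced_decay_nonneg[OF init(9) dp24 _ that]) (use Pr55_nonneg pos pos_alpha in auto)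
  show ?thesis
    using LTR_nonneg Tat_nonneg TAR_nonneg envI_nonneg envA_nonneg Pr55_nonneg p24_nonneg by auto
qed

end
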